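(* Let $\mathcal F\subseteq\mathcal O(A)$ be a conservative symmetric clone and $n\ge2$ a natural number. (1) If $\mathcal F$ contains an $n$-ary function $f$ that is not a projection but whose restriction to $A^n_{<n}$ coincides with the restriction of some projection $e^n_i$, then $\mathcal F$ satisfies $\Delta^s_n$. (2) If $\mathcal F$ contains a $\partial$-function, then $\mathcal F$ satisfies $\Delta^\partial$. (3) If $\mathcal F$ contains an $\ell$-function, then $\mathcal F$ satisfies $\Delta^s_3$.
   Context: $\mathcal O(A)=\bigcup_{n<\omega}A^{A^n}$; $\mathcal F_{[n]}=\mathcal F\cap A^{A^n}$; $S_A$ the permutations of $A$. Elements of $A^n$ are $\mathbf x=x_0\dots x_{n-1}$, $\mathrm{ran}\,\mathbf x$ the set of entries, $A^n_k=\{\mathbf x:|\mathrm{ran}\,\mathbf x|=k\}$, $A^n_{<n}=\bigcup_{k<n}A^n_k$; projections $e^n_i(\mathbf x)=x_i$. A clone with carrier $A$ is a subset of $\mathcal O(A)$ containing all projections and closed under composition; conservative if $f(\mathbf a)\in\mathrm{ran}\,\mathbf a$ for all members; symmetric if $f_\sigma(\mathbf a)=\sigma^{-1}(f(\sigma(\mathbf a)))$ is a member for each member $f$ and $\sigma\in S_A$. A $\partial$-function is $\partial\in\mathcal O(A)_{[3]}$ with $\partial(xxy)=\partial(xyx)=\partial(yxx)=x$ for all $x,y\in A$; an $\ell$-function is $\ell\in\mathcal O(A)_{[3]}$ with $\ell(x,y,y)=\ell(y,x,y)=\ell(y,y,x)=x$ for all $x,y\in A$. $\Delta^s_n$: there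 is $i<n$ such that for every $\mathbf a\in A^n_n$ and $a\in\mathrm{ran}\,\mathbf a$ there is $s\in\mathcal F_{[n]}$ with $s(\mathbf a)=a$ and $s(\mathbf x)=x_i$ for all $\mathbf x\in A^n_{<n}$. $\Delta^\partial$: for every $\mathbf a\in A^3_3$ and $a\in\mathrm{ran}\,\mathbf a$ there is a $\partial$-function $\partial\in\mathcal F$ with $\partial(\mathbf a)=a$. *)

theory Defs
  imports Main
begin

text \<open>An n-ary operation on the carrier A is represented as a pair (n, f) with
 f :: 'a list => 'a; tuples of A^n are lists of length n over A.\<close>

type_synonym 'a op = "nat \<times> ('a list \<Rightarrow> 'a)"

definition tuples :: "'a set \<Rightarrow> nat \<Rightarrow> 'a list set" where
  "tuples A n = {xs. length xs = n \<and> set xs \<subseteq> A}"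

definition ops :: "'a set \<Rightarrow> 'a op set" where
  "ops A = {(n, f). (\<forall>xs \<in> tuples A n. f xs \<in> A) \<and> (\<forall>xs. xs \<notin> tuples A n \<longrightarrow> f xs = undefined)}"

definition proj :: "'a set \<Rightarrow> nat \<Rightarrow> nat \<Rightarrow> 'a op" where
  "proj A n i = (n, \<lambda>xs. if xs \<in> tuples A n then xs ! i else undefined)"

definition compose :: "'a set \<Rightarrow> ('a list \<Rightarrow> 'a) \<Rightarrow> ('a list \<Rightarrow> 'a) list \<Rightarrow> nat \<Rightarrow> 'a op" where
  "compose A f gs m = (m, \<lambda>xs. if xs \<in> tuples A m then f (map (\<lambda>g. g xs) gs) else undefined)"

definition is_clone :: "'a set \<Rightarrow> 'a op set \<Rightarrow> bool" where
  "is_clone A F \<longleftrightarrow> F \<subseteq> ops A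
     \<and> (\<forall>n i. i < n \<longrightarrow> proj A n i \<in> F)
     \<and> (\<forall>n f gs m. (n, f) \<in> F \<and> length gs = n \<and> (\<forall>g \<in> set gs. (m, g) \<in> F)
            \<longrightarrow> compose A f gs m \<in> F)"

definition conservative :: "'a set \<Rightarrow> 'a op set \<Rightarrow> bool" where
  "conservative A F \<longleftrightarrow> (\<forall>(n, f) \<in> F. \<forall>xs \<in> tuples A n. f xs \<in> set xs)"

definition conj_op :: "'a set \<Rightarrow> ('a \<Rightarrow> 'a) \<Rightarrow> 'a op \<Rightarrow> 'a op" where
  "conj_op A \<sigma> F = (fst F, \<lambda>xs. if xs \<in> tuples A (fst F)
      then inv_into A \<sigma> (snd F (map \<sigma> xs)) else undefined)"

definition symmetric :: "'a set \<Rightarrow> 'a op set \<Rightarrow> bool" where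
  "symmetric A F \<longleftrightarrow> (\<forall>h \<in> F. \<forall>\<sigma>. bij_betw \<sigma> A A \<longrightarrow> conj_op A \<sigma> h \<in> F)"

definition tuples_k :: "'a set \<Rightarrow> nat \<Rightarrow> nat \<Rightarrow> 'a list set" where
  "tuples_k A n k = {xs \<in> tuples A n. card (set xs) = k}"

definition tuples_lt :: "'a set \<Rightarrow> nat \<Rightarrow> 'a list set" where
  "tuples_lt A n = {xs \<in> tuples A n. card (set xs) < n}"

definition Delta_s :: "'a set \<Rightarrow> 'a op set \<Rightarrow> nat \<Rightarrow> bool" where
  "Delta_s A F n \<longleftrightarrow> (\<exists>i < n. \<forall>a \<in> tuples_k A n n. \<forall>x \<in> set a.
      \<exists>s. (n, s) \<in> F \<and> s a = x \<and> (\<forall>xs \<in> tuples_lt A n. s xs = xs ! i))"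

definition is_partial_fn :: "'a set \<Rightarrow> 'a op \<Rightarrow> bool" where
  "is_partial_fn A h \<longleftrightarrow> h \<in> ops A \<and> fst h = 3 \<and>
     (\<forall>x \<in> A. \<forall>y \<in> A. snd h [x, x, y] = x \<and> snd h [x, y, x] = x \<and> snd h [y, x, x] = x)"

definition is_ell_fn :: "'a set \<Rightarrow> 'a op \<Rightarrow> bool" where
  "is_ell_fn A h \<longleftrightarrow> h \<in> ops A \<and> fst h = 3 \<and>
     (\<forall>x \<in> A. \<forall>y \<in> A. snd h [x, y, y] = x \<and> snd h [y, x, y] = x \<and> snd h [y, y, x] = x)"

definition Delta_partial :: "'a set \<Rightarrow> 'a op set \<Rightarrow> bool" where
  "Delta_partial A F \<longleftrightarrow> (\<forall>a \<in> tuples_k A 3 3. \<forall>x \<in> set a.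
      \<exists>d \<in> F. is_partial_fn A d \<and> snd d a = x)"

end

theory Submission
  imports Defs "HOL-Combinatorics.Permutations"
begin

text \<open>Symmetry lets us transport an operation of the clone along a permutation \<open>\<sigma>\<close> of \<open>A\<close>,
and the clone lets us permute its variables; both moves preserve agreement with a projection
\<open>e\<^sub>i\<close> on tuples with repeated entries (if the variable permutation fixes \<open>i\<close>) as well as the
majority identities of a \<open>\<partial>\<close>-function. By conservativity \<open>f\<close> picks some entry \<open>b\<^sub>j\<close> of an
injective tuple \<open>b\<close>. Since \<open>S\<^sub>A\<close> acts transitively on injective tuples, conjugating \<open>f\<close> by a
permutation carrying \<open>a\<close>, with its entries \<open>j\<close> and \<open>k\<close> swapped, to \<open>b\<close>, and then swapping
the variables \<open>j\<close> and \<open>k\<close>, yields an operation picking \<open>a\<^sub>k\<close> from any injective tuple \<open>a\<close>.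
For an \<open>\<ell>\<close>-function \<open>l\<close>, the operations \<open>l(l(x,y,z),y,z)\<close> and \<open>l(x,l(x,y,z),z)\<close> agree
with \<open>e\<^sub>0\<close> and \<open>e\<^sub>1\<close> on triples with a repetition, and at an injective triple one of them is
not that projection, so the first argument applies.\<close>

lemma tuples_k_distinct: "a \<in> tuples_k A n n \<Longrightarrow> distinct a"
  unfolding tuples_k_def tuples_def by (auto intro: card_distinct)

lemma tuples_k_tuples: "a \<in> tuples_k A n k \<Longrightarrow> a \<in> tuples A n"
  by (simp add: tuples_k_def)

lemma tuples_lt_tuples: "xs \<in> tuples_lt A n \<Longrightarrow> xs \<in> tuples A n"
  by (simp add: tuples_lt_def)

lemma tuples_nth_in: "xs \<in> tuples A n \<Longrightarrow> i < n \<Longrightarrow> xs ! i \<in> A"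
  by (auto simp: tuples_def)

lemma tuples_3_iff: "xs \<in> tuples A 3 \<longleftrightarrow> (\<exists>x y z. xs = [x, y, z] \<and> x \<in> A \<and> y \<in> A \<and> z \<in> A)"
  by (auto simp: tuples_def numeral_3_eq_3 length_Suc_conv)

lemma tuples_lt_3_iff:
  "xs \<in> tuples_lt A 3 \<longleftrightarrow>
     (\<exists>x y z. xs = [x, y, z] \<and> x \<in> A \<and> y \<in> A \<and> z \<in> A \<and> (x = y \<or> y = z \<or> x = z))"
  unfolding tuples_lt_def tuples_3_iff by (auto simp: card_insert_if split: if_splits)

lemma conservative_apply_in_set:
  "conservative A F \<Longrightarrow> (n, f) \<in> F \<Longrightarrow> xs \<in> tuples A n \<Longrightarrow> \<exists>j < n. f xs = xs ! j"
  unfolding conservative_def tuples_def by (fastforce simp: in_set_conv_nth)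

lemma clone_subset_ops: "is_clone A F \<Longrightarrow> F \<subseteq> ops A"
  by (simp add: is_clone_def)

lemma clone_compose_in:
  "is_clone A F \<Longrightarrow> (n, f) \<in> F \<Longrightarrow> length gs = n \<Longrightarrow> \<forall>g \<in> set gs. (m, g) \<in> F
    \<Longrightarrow> Defs.compose A f gs m \<in> F"
  unfolding is_clone_def by blast

lemma clone_proj_in: "is_clone A F \<Longrightarrow> i < n \<Longrightarrow> (n, snd (proj A n i)) \<in> F"
  unfolding is_clone_def by (metis proj_def snd_conv)

lemma bij_betw_map_distinct:
  assumes "distinct c" "distinct b" "length c = length b" "set c \<subseteq> A" "set b \<subseteq> A"
  shows "\<exists>\<sigma>. bij_betw \<sigma> A A \<and> map \<sigma> c = b"
  using assms
proof (induction c arbitrary: b)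
  case Nil
  then show ?case by (auto intro: bij_betw_id)
next
  case (Cons x c b)
  then obtain y b' where b: "b = y # b'" by (cases b) auto
  with Cons obtain \<tau> where \<tau>: "bij_betw \<tau> A A" "map \<tau> c = b'" by auto
  have "x \<in> A" "y \<in> A" using Cons.prems b by auto
  then have "\<tau> x \<in> A" using \<tau>(1) bij_betwE by blast
  define \<sigma> where "\<sigma> = transpose y (\<tau> x) \<circ> \<tau>"
  have "bij_betw \<sigma> A A"
    unfolding \<sigma>_def using \<tau>(1) \<open>y \<in> A\<close> \<open>\<tau> x \<in> A\<close> by (auto intro: bij_betw_trans)
  moreover have "\<sigma> z = \<tau> z" if "z \<in> set c" for z
  proof -
    have "\<tau> z \<noteq> y" using that \<tau>(2) Cons.prems b by auto
    moreover have "\<tau> z \<noteq> \<tau> x"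
      using that Cons.prems \<tau>(1) \<open>x \<in> A\<close> by (auto simp: bij_betw_def inj_on_def)
    ultimately show ?thesis by (simp add: \<sigma>_def)
  qed
  then have "map \<sigma> c = b'" using \<tau>(2) by (metis map_eq_conv)
  moreover have "\<sigma> x = y" by (simp add: \<sigma>_def)
  ultimately show ?case using b by auto
qed

lemma symmetric_conj_op_in:
  "symmetric A F \<Longrightarrow> (n, f) \<in> F \<Longrightarrow> bij_betw \<sigma> A A \<Longrightarrow> (n, snd (conj_op A \<sigma> (n, f))) \<in> F"
  unfolding symmetric_def by (metis conj_op_def fst_conv snd_conv)

lemma conj_op_apply:
  "xs \<in> tuples A n \<Longrightarrow> snd (conj_op A \<sigma> (n, f)) xs = inv_into A \<sigma> (f (map \<sigma> xs))"
  by (simp add: conj_op_def)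

lemma map_bij_betw_tuples:
  assumes "bij_betw \<sigma> A A" "xs \<in> tuples A n"
  shows "map \<sigma> xs \<in> tuples A n" "card (set (map \<sigma> xs)) = card (set xs)"
proof -
  show "map \<sigma> xs \<in> tuples A n" using assms bij_betwE by (fastforce simp: tuples_def)
  have "inj_on \<sigma> (set xs)"
    using assms by (auto simp: tuples_def bij_betw_def intro: inj_on_subset)
  then show "card (set (map \<sigma> xs)) = card (set xs)" by (simp add: card_image)
qed

lemma conj_op_agrees_proj:
  assumes "bij_betw \<sigma> A A" "i < n" "\<forall>xs \<in> tuples_lt A n. f xs = xs ! i"
  shows "\<forall>xs \<in> tuples_lt A n. snd (conj_op A \<sigma> (n, f)) xs = xs ! i"
proof
  fix xs assume xs: "xs \<in> tuples_lt A n"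
  then have "xs \<in> tuples A n" by (rule tuples_lt_tuples)
  with xs have "map \<sigma> xs \<in> tuples_lt A n"
    using map_bij_betw_tuples[OF assms(1)] by (simp add: tuples_lt_def)
  with assms \<open>xs \<in> tuples A n\<close> have "f (map \<sigma> xs) = \<sigma> (xs ! i)" by (simp add: tuples_def)
  then show "snd (conj_op A \<sigma> (n, f)) xs = xs ! i"
    using assms(1,2) \<open>xs \<in> tuples A n\<close>
    by (simp add: conj_op_apply tuples_nth_in bij_betw_inv_into_left)
qed

definition permute_vars :: "'a set \<Rightarrow> nat \<Rightarrow> (nat \<Rightarrow> nat) \<Rightarrow> ('a list \<Rightarrow> 'a) \<Rightarrow> 'a list \<Rightarrow> 'a" where
  "permute_vars A n \<pi> f = (\<lambda>xs. if xs \<in> tuples A n then f (permute_list \<pi> xs) else undefined)"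

lemma clone_permute_vars_in:
  assumes cl: "is_clone A F" and f: "(n, f) \<in> F" and \<pi>: "\<pi> permutes {..<n}"
  shows "(n, permute_vars A n \<pi> f) \<in> F"
proof -
  let ?gs = "map (\<lambda>m. snd (proj A n (\<pi> m))) [0..<n]"
  have "\<forall>g \<in> set ?gs. (n, g) \<in> F" using clone_proj_in[OF cl] permutes_in_image[OF \<pi>] by auto
  then have "Defs.compose A f ?gs n \<in> F" using clone_compose_in[OF cl f] by simp
  moreover have "Defs.compose A f ?gs n = (n, permute_vars A n \<pi> f)"
    by (auto simp: Defs.compose_def permute_vars_def proj_def permute_list_def tuples_def fun_eq_iff comp_def)
  ultimately show ?thesis by simp
qed

lemma permute_list_in_tuples:
  "\<pi> permutes {..<n} \<Longrightarrow> xs \<in> tuples A n \<Longrightarrow> permute_list \<pi> xs \<in> tuples A n"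
  by (simp add: tuples_def)

lemma permute_list_in_tuples_lt:
  "\<pi> permutes {..<n} \<Longrightarrow> xs \<in> tuples_lt A n \<Longrightarrow> permute_list \<pi> xs \<in> tuples_lt A n"
  by (simp add: tuples_lt_def tuples_def)

lemma permute_vars_agrees_proj:
  assumes \<pi>: "\<pi> permutes {..<n}" "\<pi> i = i" and i: "i < n"
    and f: "\<forall>xs \<in> tuples_lt A n. f xs = xs ! i"
  shows "\<forall>xs \<in> tuples_lt A n. permute_vars A n \<pi> f xs = xs ! i"
proof
  fix xs assume xs: "xs \<in> tuples_lt A n"
  then have "length xs = n" by (simp add: tuples_lt_def tuples_def)
  have "f (permute_list \<pi> xs) = permute_list \<pi> xs ! i"
    by (rule bspec[OF f permute_list_in_tuples_lt[OF \<pi>(1) xs]])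
  also have "\<dots> = xs ! i" using \<pi> i \<open>length xs = n\<close> by (simp add: permute_list_nth)
  finally show "permute_vars A n \<pi> f xs = xs ! i"
    using tuples_lt_tuples[OF xs] by (simp add: permute_vars_def)
qed

lemma conj_permute_vars_realises:
  assumes b: "b \<in> tuples_k A n n" "j < n" "f b = b ! j"
    and a: "a \<in> tuples_k A n n" and \<pi>: "\<pi> permutes {..<n}"
  obtains \<sigma> where "bij_betw \<sigma> A A"
    and "permute_vars A n \<pi> (snd (conj_op A \<sigma> (n, f))) a = a ! \<pi> j"
proof -
  define c where "c = permute_list \<pi> a"
  have at: "a \<in> tuples A n" using a by (rule tuples_k_tuples)
  have bt: "b \<in> tuples A n" using b(1) by (rule tuples_k_tuples)
  have ct: "c \<in> tuples A n" unfolding c_def using \<pi> at by (rule permute_list_in_tuples)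
  have "length a = n" using at by (simp add: tuples_def)
  then have "distinct c" unfolding c_def using \<pi> tuples_k_distinct[OF a] by simp
  then have "\<exists>\<sigma>. bij_betw \<sigma> A A \<and> map \<sigma> c = b"
    using ct bt by (intro bij_betw_map_distinct tuples_k_distinct[OF b(1)]) (auto simp: tuples_def)
  then obtain \<sigma> where \<sigma>: "bij_betw \<sigma> A A" "map \<sigma> c = b" by blast
  have cj: "c ! j \<in> A" using ct b(2) by (rule tuples_nth_in)
  have "permute_vars A n \<pi> (snd (conj_op A \<sigma> (n, f))) a = inv_into A \<sigma> (f (map \<sigma> c))"
    using at ct by (simp add: permute_vars_def conj_op_apply c_def)
  also have "f (map \<sigma> c) = \<sigma> (c ! j)"
    using \<sigma>(2) b(2,3) ct by (auto simp: tuples_def)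
  also have "inv_into A \<sigma> (\<sigma> (c ! j)) = c ! j" using \<sigma>(1) cj by (rule bij_betw_inv_into_left)
  also have "c ! j = a ! \<pi> j" using \<pi> b(2) \<open>length a = n\<close> by (simp add: c_def permute_list_nth)
  finally show ?thesis using that \<sigma>(1) by blast
qed

subsection \<open>Non-projections that are projections on repetitive tuples\<close>

lemma Delta_s_if_deviates_on_injective:
  assumes cl: "is_clone A F" and co: "conservative A F" and sy: "symmetric A F"
    and f: "(n, f) \<in> F" and i: "i < n" and lt: "\<forall>xs \<in> tuples_lt A n. f xs = xs ! i"
    and b: "b \<in> tuples_k A n n" and fb: "f b \<noteq> b ! i"
  shows "Delta_s A F n"
  unfolding Delta_s_def
proof (intro exI[of _ i] conjI ballI i)
  fix a x assume a: "a \<in> tuples_k A n n" and x: "x \<in> set a"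
  have at: "a \<in> tuples A n" using a by (rule tuples_k_tuples)
  obtain j where j: "j < n" "f b = b ! j"
    using conservative_apply_in_set[OF co f tuples_k_tuples[OF b]] by blast
  obtain k where k: "k < n" "x = a ! k" using x at by (auto simp: in_set_conv_nth tuples_def)
  show "\<exists>s. (n, s) \<in> F \<and> s a = x \<and> (\<forall>xs \<in> tuples_lt A n. s xs = xs ! i)"
  proof (cases "k = i")
    case True
    then show ?thesis
      using clone_proj_in[OF cl i] k at
      by (intro exI[of _ "snd (proj A n i)"]) (auto simp: proj_def tuples_lt_def)
  next
    case False
    let ?\<pi> = "transpose j k"
    have \<pi>: "?\<pi> permutes {..<n}" using j k by (simp add: permutes_swap_id)
    have "i \<noteq> j" using fb j by auto
    then have \<pi>i: "?\<pi> i = i" using False by simp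
    obtain \<sigma> where \<sigma>: "bij_betw \<sigma> A A"
      and val: "permute_vars A n ?\<pi> (snd (conj_op A \<sigma> (n, f))) a = a ! ?\<pi> j"
      using conj_permute_vars_realises[where f=f, OF b j(1,2) a \<pi>] .
    show ?thesis
    proof (intro exI conjI)
      show "(n, permute_vars A n ?\<pi> (snd (conj_op A \<sigma> (n, f)))) \<in> F"
        using clone_permute_vars_in[OF cl symmetric_conj_op_in[OF sy f \<sigma>] \<pi>] .
      show "permute_vars A n ?\<pi> (snd (conj_op A \<sigma> (n, f))) a = x" using val k by simp
      show "\<forall>xs \<in> tuples_lt A n. permute_vars A n ?\<pi> (snd (conj_op A \<sigma> (n, f))) xs = xs ! i"
        using permute_vars_agrees_proj[OF \<pi> \<pi>i i conj_op_agrees_proj[OF \<sigma> i lt]] .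
    qed
  qed
qed

lemma deviates_on_injective_if_not_proj:
  assumes f: "(n, f) \<in> ops A" "(n, f) \<noteq> proj A n i"
    and lt: "\<forall>xs \<in> tuples_lt A n. f xs = xs ! i"
  shows "\<exists>b \<in> tuples_k A n n. f b \<noteq> b ! i"
proof (rule ccontr)
  assume "\<not> ?thesis"
  then have inj: "\<forall>b \<in> tuples_k A n n. f b = b ! i" by blast
  have "f xs = snd (proj A n i) xs" for xs
  proof (cases "xs \<in> tuples A n")
    case True
    then have "card (set xs) \<le> n" by (auto simp: tuples_def card_length)
    with True have "xs \<in> tuples_lt A n \<or> xs \<in> tuples_k A n n"
      by (auto simp: tuples_lt_def tuples_k_def)
    then have "f xs = xs ! i" using lt inj by (auto dest: bspec)
    with True show ?thesis by (simp add: proj_def)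
  next
    case False
    then show ?thesis using f(1) by (simp add: ops_def proj_def)
  qed
  then have "(n, f) = proj A n i" by (simp add: proj_def fun_eq_iff)
  with f(2) show False by blast
qed

lemma Delta_s_if_not_proj:
  assumes cl: "is_clone A F" and co: "conservative A F" and sy: "symmetric A F"
    and f: "(n, f) \<in> F" "(n, f) \<noteq> proj A n i" and i: "i < n"
    and lt: "\<forall>xs \<in> tuples_lt A n. f xs = xs ! i"
  shows "Delta_s A F n"
proof -
  have "(n, f) \<in> ops A" using clone_subset_ops[OF cl] f(1) by blast
  then obtain b where "b \<in> tuples_k A n n" "f b \<noteq> b ! i"
    using deviates_on_injective_if_not_proj f(2) lt by blast
  then show ?thesis using Delta_s_if_deviates_on_injective[OF cl co sy f(1) i lt] by blast
qed

subsection \<open>\<open>\<partial>\<close>-functions\<close>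

definition majority_on :: "'a set \<Rightarrow> ('a list \<Rightarrow> 'a) \<Rightarrow> bool" where
  "majority_on A g \<longleftrightarrow> (\<forall>x \<in> A. \<forall>y \<in> A. g [x, x, y] = x \<and> g [x, y, x] = x \<and> g [y, x, x] = x)"

lemma is_partial_fn_iff: "is_partial_fn A h \<longleftrightarrow> h \<in> ops A \<and> fst h = 3 \<and> majority_on A (snd h)"
  by (simp add: is_partial_fn_def majority_on_def)

lemma majority_onD:
  "majority_on A g \<Longrightarrow> x \<in> A \<Longrightarrow> y \<in> A \<Longrightarrow> g [x, x, y] = x \<and> g [x, y, x] = x \<and> g [y, x, x] = x"
  by (simp add: majority_on_def)

lemma majority_on_conj_op:
  assumes \<sigma>: "bij_betw \<sigma> A A" and f: "majority_on A f"
  shows "majority_on A (snd (conj_op A \<sigma> (3, f)))"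
  unfolding majority_on_def
proof (intro ballI)
  fix u v assume uv: "u \<in> A" "v \<in> A"
  then have "\<sigma> u \<in> A" "\<sigma> v \<in> A" using \<sigma> bij_betwE by blast+
  then have "f [\<sigma> u, \<sigma> u, \<sigma> v] = \<sigma> u \<and> f [\<sigma> u, \<sigma> v, \<sigma> u] = \<sigma> u \<and> f [\<sigma> v, \<sigma> u, \<sigma> u] = \<sigma> u"
    by (rule majority_onD[OF f])
  with uv \<sigma> show "snd (conj_op A \<sigma> (3, f)) [u, u, v] = u \<and> snd (conj_op A \<sigma> (3, f)) [u, v, u] = u
      \<and> snd (conj_op A \<sigma> (3, f)) [v, u, u] = u"
    by (simp add: conj_op_apply tuples_3_iff bij_betw_inv_into_left)
qed

lemma majority_on_permute_vars:
  assumes \<pi>: "\<pi> permutes {..<3}" and f: "majority_on A f"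
  shows "majority_on A (permute_vars A 3 \<pi> f)"
  unfolding majority_on_def
proof (intro ballI)
  fix u v assume uv: "u \<in> A" "v \<in> A"
  have lt: "\<pi> 0 < 3" "\<pi> 1 < 3" "\<pi> 2 < 3" using permutes_in_image[OF \<pi>] by auto
  have "\<pi> 0 \<noteq> \<pi> 1" "\<pi> 0 \<noteq> \<pi> 2" "\<pi> 1 \<noteq> \<pi> 2"
    using permutes_inj[OF \<pi>] by (simp_all add: inj_eq)
  moreover have "p = 0 \<or> p = 1 \<or> p = 2" if "p < 3" for p :: nat using that by linarith
  ultimately have "(\<pi> 0, \<pi> 1, \<pi> 2) \<in> {(0, 1, 2), (0, 2, 1), (1, 0, 2), (1, 2, 0), (2, 0, 1), (2, 1, 0)}"
    using lt by (metis insertCI)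
  moreover have "permute_list \<pi> [p, q, r] = [[p, q, r] ! \<pi> 0, [p, q, r] ! \<pi> 1, [p, q, r] ! \<pi> 2]"
    for p q r :: 'a by (simp add: permute_list_def upt_rec numeral_2_eq_2)
  moreover have "f [u, u, v] = u \<and> f [u, v, u] = u \<and> f [v, u, u] = u"
    using majority_onD[OF f uv] .
  ultimately show "permute_vars A 3 \<pi> f [u, u, v] = u \<and> permute_vars A 3 \<pi> f [u, v, u] = u
      \<and> permute_vars A 3 \<pi> f [v, u, u] = u"
    using uv by (auto simp: permute_vars_def tuples_3_iff)
qed

lemma Delta_partial_if_partial_fn:
  assumes cl: "is_clone A F" and co: "conservative A F" and sy: "symmetric A F"
    and d: "d \<in> F" "is_partial_fn A d"
  shows "Delta_partial A F"
  unfolding Delta_partial_def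
proof (intro ballI)
  fix a x assume a: "a \<in> tuples_k A 3 3" and x: "x \<in> set a"
  obtain f where df: "d = (3, f)" using d(2) by (cases d) (auto simp: is_partial_fn_def)
  have f: "(3, f) \<in> F" "majority_on A f" using d df by (auto simp: is_partial_fn_iff)
  have at: "a \<in> tuples A 3" using a by (rule tuples_k_tuples)
  obtain j where j: "j < 3" "f a = a ! j" using conservative_apply_in_set[OF co f(1) at] by blast
  obtain k where k: "k < 3" "x = a ! k" using x at by (auto simp: in_set_conv_nth tuples_def)
  let ?\<pi> = "transpose j k"
  have \<pi>: "?\<pi> permutes {..<3}" using j k by (simp add: permutes_swap_id)
  obtain \<sigma> where \<sigma>: "bij_betw \<sigma> A A"
    and val: "permute_vars A 3 ?\<pi> (snd (conj_op A \<sigma> (3, f))) a = a ! ?\<pi> j"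
    using conj_permute_vars_realises[where f=f, OF a j a \<pi>] .
  let ?g = "permute_vars A 3 ?\<pi> (snd (conj_op A \<sigma> (3, f)))"
  have gF: "(3, ?g) \<in> F"
    using clone_permute_vars_in[OF cl symmetric_conj_op_in[OF sy f(1) \<sigma>] \<pi>] .
  moreover have "is_partial_fn A (3, ?g)"
    using gF clone_subset_ops[OF cl] majority_on_permute_vars[OF \<pi> majority_on_conj_op[OF \<sigma> f(2)]]
    by (auto simp: is_partial_fn_iff)
  moreover have "?g a = x" using val k by simp
  ultimately show "\<exists>d \<in> F. is_partial_fn A d \<and> snd d a = x" by force
qed

subsection \<open>\<open>\<ell>\<close>-functions\<close>

lemma ell_fn_derived_on_repetitive:
  assumes l: "\<And>u v. u \<in> A \<Longrightarrow> v \<in> A \<Longrightarrow> l [u, v, v] = u \<and> l [v, u, v] = u \<and> l [v, v, u] = u"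
    and A: "x \<in> A" "y \<in> A" "z \<in> A" and rep: "x = y \<or> y = z \<or> x = z"
  shows "l [l [x, y, z], y, z] = x \<and> l [x, l [x, y, z], z] = y"
  using rep
proof (elim disjE)
  assume "x = y"
  then show ?thesis using l[OF A(1) A(3)] l[OF A(3) A(1)] by simp
next
  assume "y = z"
  then show ?thesis using l[OF A(1) A(2)] l[OF A(2) A(1)] by simp
next
  assume "x = z"
  then show ?thesis using l[OF A(1) A(2)] l[OF A(2) A(1)] by simp
qed

lemma ell_fn_derived_on_injective:
  assumes l: "\<And>u v. u \<in> A \<Longrightarrow> v \<in> A \<Longrightarrow> l [u, v, v] = u \<and> l [v, u, v] = u \<and> l [v, v, u] = u"
    and A: "x \<in> A" "y \<in> A" "z \<in> A" and inj: "x \<noteq> y" "y \<noteq> z" "x \<noteq> z"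
    and cons: "l [x, y, z] \<in> {x, y, z}"
  shows "l [l [x, y, z], y, z] \<noteq> x \<or> l [x, l [x, y, z], z] \<noteq> y"
proof -
  have "l [y, y, z] = z" "l [z, y, z] = y" "l [x, x, z] = z"
    using l[OF A(3) A(2)] l[OF A(2) A(3)] l[OF A(3) A(1)] by simp_all
  with cons inj show ?thesis by auto
qed

lemma clone_nested_ternary_in:
  assumes cl: "is_clone A F" and f: "(3, f) \<in> F"
  obtains s0 s1 where "(3, s0) \<in> F" "(3, s1) \<in> F"
    and "\<And>u v w. u \<in> A \<Longrightarrow> v \<in> A \<Longrightarrow> w \<in> A \<Longrightarrow>
           s0 [u, v, w] = f [f [u, v, w], v, w] \<and> s1 [u, v, w] = f [u, f [u, v, w], w]"
proof
  define p where "p k = snd (proj A 3 k)" for k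
  have pF: "(3, p k) \<in> F" if "k < 3" for k using clone_proj_in[OF cl that] by (simp add: p_def)
  show "(3, snd (Defs.compose A f [f, p 1, p 2] 3)) \<in> F" "(3, snd (Defs.compose A f [p 0, f, p 2] 3)) \<in> F"
    using clone_compose_in[OF cl f] f pF by (simp_all add: Defs.compose_def)
  show "snd (Defs.compose A f [f, p 1, p 2] 3) [u, v, w] = f [f [u, v, w], v, w]
      \<and> snd (Defs.compose A f [p 0, f, p 2] 3) [u, v, w] = f [u, f [u, v, w], w]"
    if "u \<in> A" "v \<in> A" "w \<in> A" for u v w
    using that by (simp add: p_def Defs.compose_def proj_def tuples_3_iff)
qed

lemma Delta_s_if_ell_fn:
  assumes cl: "is_clone A F" and co: "conservative A F" and sy: "symmetric A F"
    and l: "l \<in> F" "is_ell_fn A l"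
  shows "Delta_s A F 3"
proof (cases "tuples_k A 3 3 = {}")
  case True
  then show ?thesis unfolding Delta_s_def by (intro exI[of _ 0]) auto
next
  case False
  then obtain a where a: "a \<in> tuples_k A 3 3" by auto
  then obtain x y z where xyz: "a = [x, y, z]" "x \<in> A" "y \<in> A" "z \<in> A" "x \<noteq> y" "y \<noteq> z" "x \<noteq> z"
    using tuples_k_distinct[OF a] tuples_k_tuples[OF a] by (auto simp: tuples_3_iff)
  obtain f where lf: "l = (3, f)" using l(2) by (cases l) (auto simp: is_ell_fn_def)
  have fF: "(3, f) \<in> F" using l lf by simp
  have ell: "\<And>u v. u \<in> A \<Longrightarrow> v \<in> A \<Longrightarrow> f [u, v, v] = u \<and> f [v, u, v] = u \<and> f [v, v, u] = u"
    using l(2) lf by (simp add: is_ell_fn_def)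
  obtain s0 s1 where sF: "(3, s0) \<in> F" "(3, s1) \<in> F"
    and s: "\<And>u v w. u \<in> A \<Longrightarrow> v \<in> A \<Longrightarrow> w \<in> A \<Longrightarrow>
           s0 [u, v, w] = f [f [u, v, w], v, w] \<and> s1 [u, v, w] = f [u, f [u, v, w], w]"
    using clone_nested_ternary_in[OF cl fF] by blast
  have s_rep: "s0 xs = xs ! 0 \<and> s1 xs = xs ! 1" if xs: "xs \<in> tuples_lt A 3" for xs
  proof -
    obtain u v w where uvw: "xs = [u, v, w]" "u \<in> A" "v \<in> A" "w \<in> A" "u = v \<or> v = w \<or> u = w"
      using xs unfolding tuples_lt_3_iff by blast
    then show ?thesis using ell_fn_derived_on_repetitive[OF ell uvw(2-5)] s[OF uvw(2-4)] by simp
  qed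
  then have s0_lt: "\<forall>xs \<in> tuples_lt A 3. s0 xs = xs ! 0"
    and s1_lt: "\<forall>xs \<in> tuples_lt A 3. s1 xs = xs ! 1" by simp_all
  have "f a \<in> set a" using co fF tuples_k_tuples[OF a] by (auto simp: conservative_def)
  then have "s0 a \<noteq> a ! 0 \<or> s1 a \<noteq> a ! 1"
    using ell_fn_derived_on_injective[OF ell xyz(2-7)] s[OF xyz(2-4)] xyz(1) by simp
  then show ?thesis
    using Delta_s_if_deviates_on_injective[OF cl co sy sF(1) _ s0_lt a]
      Delta_s_if_deviates_on_injective[OF cl co sy sF(2) _ s1_lt a] by auto
qed

theorem mainTheorem17:
  fixes A :: "'a set" and F :: "'a op set" and n :: nat
  assumes "is_clone A F" and "conservative A F" and "symmetric A F" and "n \<ge> 2"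
  shows "((\<exists>f i. (n, f) \<in> F \<and> (\<forall>j < n. (n, f) \<noteq> proj A n j) \<and> i < n \<and>
             (\<forall>xs \<in> tuples_lt A n. f xs = xs ! i)) \<longrightarrow> Delta_s A F n)
       \<and> ((\<exists>d \<in> F. is_partial_fn A d) \<longrightarrow> Delta_partial A F)
       \<and> ((\<exists>l \<in> F. is_ell_fn A l) \<longrightarrow> Delta_s A F 3)"
proof (intro conjI impI)
  assume "\<exists>f i. (n, f) \<in> F \<and> (\<forall>j < n. (n, f) \<noteq> proj A n j) \<and> i < n \<and>
             (\<forall>xs \<in> tuples_lt A n. f xs = xs ! i)"
  then show "Delta_s A F n" using Delta_s_if_not_proj[OF assms(1-3)] by blast
next
  assume "\<exists>d \<in> F. is_partial_fn A d"
  then show "Delta_partial A F" using Delta_partial_if_partial_fn[OF assms(1-3)] by blast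
next
  assume "\<exists>l \<in> F. is_ell_fn A l"
  then show "Delta_s A F 3" using Delta_s_if_ell_fn[OF assms(1-3)] by blast
qed

end
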